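(* Let $M$ be a universal semi-POVM and let $m$ be a universal probability. Then there is a real $c>0$ such that for all $s\in\Sigma^*$, $c\,M(s)\leqslant m(s)I$ and $c\,m(s)I\leqslant M(s)$.
   Context: $N$ is a fixed positive integer; $\Sigma^*$ is the set of finite binary strings. $\mathrm{Her}(N)$ is the set of $N\times N$ Hermitian matrices and $\mathrm{Her}_Q(N)$ those with entries in $\{a+ib:a,b\in\mathbb{Q}\}$; $A\leqslant B$ means $B-A$ is positive semi-definite. A lower-computable semi-measure is a function $r:\Sigma^*\to[0,\infty)$ with $\sum_s r(s)\le 1$ such that there is a total recursive $f:\mathbb{N}\times\Sigma^*\to\mathbb{Q}$ with $\lim_{n}f(n,s)=r(s)$ and $f(n,s)\le f(n+1,s)$ for all $n,s$. A universal probability is a lower-computable semi-measure $m$ such that for every lower-computable semi-measure $r$ there is $c>0$ with $c\,r(s)\le m(s)$ for all $s$. A semi-POVM on $\Sigma^*$ is a map $R:\Sigma^*\to\mathrm{Her}(N)$ with $0\leqslant R(s)$ for all $s$ and $\sum_s R(s)\leqslant I$. A lower-computable semi-POVM is a semi-POVM $R$ for which there is a total recursive $f:\mathbb{N}\times\Sigma^*\to\mathrm{Her}_Q(N)$ with $\lim_{n}f(n,s)=R(s)$ and $f(n,s)\leqslant R(s)$ for all $n,s$. A universal semi-POVM is a lower-computable semi-POVM $M$ such that for every lower-computable semi-POVM $R$ there is $c>0$ with $c\,R(s)\leqslant M(s)$ for all $s\in\Sigma^*$. *)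

theory Defs
  imports Complex_Main "HOL-Library.Nat_Bijection"
begin

datatype recf = Zf | Sf | Proj nat | Comp recf "recf list" | Prim recf recf | Mu recf

inductive reval :: "recf \<Rightarrow> nat list \<Rightarrow> nat \<Rightarrow> bool" where
  zero: "reval Zf xs 0"
| succ: "reval Sf (x # xs) (Suc x)"
| proj: "i < length xs \<Longrightarrow> reval (Proj i) xs (xs ! i)"
| comp: "list_all2 (\<lambda>g y. reval g xs y) gs ys \<Longrightarrow> reval f ys z \<Longrightarrow> reval (Comp f gs) xs z"
| prim0: "reval f xs y \<Longrightarrow> reval (Prim f g) (0 # xs) y"
| primS: "reval (Prim f g) (n # xs) y \<Longrightarrow> reval g (n # y # xs) z
          \<Longrightarrow> reval (Prim f g) (Suc n # xs) z"
| mu: "reval f (n # xs) 0 \<Longrightarrow> (\<forall>k<n. \<exists>y. reval f (k # xs) y \<and> 0 < y)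
          \<Longrightarrow> reval (Mu f) xs n"

definition total_recursive :: "(nat \<Rightarrow> nat) \<Rightarrow> bool" where
  "total_recursive g \<longleftrightarrow> (\<exists>p. \<forall>n. reval p [n] (g n))"

text \<open>Binary strings: bool list; standard bijection with nat (s maps to the number
  with binary expansion 1s, minus 1).\<close>
definition str_enc :: "bool list \<Rightarrow> nat" where
  "str_enc bs = foldl (\<lambda>n b. 2 * n + (if b then 1 else 0)) 1 bs - 1"

definition rat_dec :: "nat \<Rightarrow> rat" where
  "rat_dec k = (case prod_decode k of (a, b) \<Rightarrow> Fract (int_decode a) (int b))"

definition gauss_dec :: "nat \<Rightarrow> complex" where
  "gauss_dec k = (case prod_decode k of (a, b) \<Rightarrow> Complex (of_rat (rat_dec a)) (of_rat (rat_dec b)))"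

type_synonym cmat = "nat \<Rightarrow> nat \<Rightarrow> complex"

definition gmat_dec :: "nat \<Rightarrow> nat \<Rightarrow> cmat" where
  "gmat_dec N k = (\<lambda>i j. let l = list_decode k in
     if i < N \<and> j < N \<and> i * N + j < length l then gauss_dec (l ! (i * N + j)) else 0)"

definition computable_rat_fun :: "(nat \<Rightarrow> bool list \<Rightarrow> rat) \<Rightarrow> bool" where
  "computable_rat_fun f \<longleftrightarrow>
     (\<exists>g. total_recursive g \<and> (\<forall>n s. f n s = rat_dec (g (prod_encode (n, str_enc s)))))"

definition computable_gmat_fun :: "nat \<Rightarrow> (nat \<Rightarrow> bool list \<Rightarrow> cmat) \<Rightarrow> bool" where
  "computable_gmat_fun N f \<longleftrightarrow>
     (\<exists>g. total_recursive g \<and> (\<forall>n s. f n s = gmat_dec N (g (prod_encode (n, str_enc s)))))"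

definition hermitian :: "nat \<Rightarrow> cmat \<Rightarrow> bool" where
  "hermitian N A \<longleftrightarrow> (\<forall>i<N. \<forall>j<N. A j i = cnj (A i j))"

definition psd :: "nat \<Rightarrow> cmat \<Rightarrow> bool" where
  "psd N A \<longleftrightarrow> hermitian N A \<and>
     (\<forall>x :: nat \<Rightarrow> complex. 0 \<le> Re (\<Sum>i<N. \<Sum>j<N. cnj (x i) * A i j * x j))"

definition loewner_le :: "nat \<Rightarrow> cmat \<Rightarrow> cmat \<Rightarrow> bool" where
  "loewner_le N A B \<longleftrightarrow> psd N (\<lambda>i j. B i j - A i j)"

definition idm :: cmat where
  "idm = (\<lambda>i j. if i = j then 1 else 0)"

definition mscale :: "complex \<Rightarrow> cmat \<Rightarrow> cmat" where
  "mscale c A = (\<lambda>i j. c * A i j)"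

definition msum :: "'a set \<Rightarrow> ('a \<Rightarrow> cmat) \<Rightarrow> cmat" where
  "msum F A = (\<lambda>i j. \<Sum>s\<in>F. A s i j)"

definition semi_measure :: "(bool list \<Rightarrow> real) \<Rightarrow> bool" where
  "semi_measure r \<longleftrightarrow> (\<forall>s. 0 \<le> r s) \<and> (\<forall>F. finite F \<longrightarrow> (\<Sum>s\<in>F. r s) \<le> 1)"

definition lower_computable_semi_measure :: "(bool list \<Rightarrow> real) \<Rightarrow> bool" where
  "lower_computable_semi_measure r \<longleftrightarrow> semi_measure r \<and>
     (\<exists>f. computable_rat_fun f \<and>
        (\<forall>s. (\<lambda>n. real_of_rat (f n s)) \<longlonglongrightarrow> r s) \<and>
        (\<forall>n s. f n s \<le> f (Suc n) s))"

definition universal_probability :: "(bool list \<Rightarrow> real) \<Rightarrow> bool" where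
  "universal_probability m \<longleftrightarrow> lower_computable_semi_measure m \<and>
     (\<forall>r. lower_computable_semi_measure r \<longrightarrow> (\<exists>c>0. \<forall>s. c * r s \<le> m s))"

definition semi_povm :: "nat \<Rightarrow> (bool list \<Rightarrow> cmat) \<Rightarrow> bool" where
  "semi_povm N R \<longleftrightarrow> (\<forall>s. psd N (R s)) \<and>
     (\<forall>F. finite F \<longrightarrow> loewner_le N (msum F R) idm)"

definition lower_computable_semi_povm :: "nat \<Rightarrow> (bool list \<Rightarrow> cmat) \<Rightarrow> bool" where
  "lower_computable_semi_povm N R \<longleftrightarrow> semi_povm N R \<and>
     (\<exists>f. computable_gmat_fun N f \<and>
        (\<forall>n s. hermitian N (f n s)) \<and>
        (\<forall>s. \<forall>i<N. \<forall>j<N. (\<lambda>n. f n s i j) \<longlonglongrightarrow> R s i j) \<and>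
        (\<forall>n s. loewner_le N (f n s) (R s)))"

definition universal_semi_povm :: "nat \<Rightarrow> (bool list \<Rightarrow> cmat) \<Rightarrow> bool" where
  "universal_semi_povm N M \<longleftrightarrow> lower_computable_semi_povm N M \<and>
     (\<forall>R. lower_computable_semi_povm N R \<longrightarrow>
        (\<exists>c::real>0. \<forall>s. loewner_le N (mscale (complex_of_real c) (R s)) (M s)))"

end

theory Submission
  imports Defs
begin

text \<open>Both inequalities come from universality, applied once in each direction. A lower-computable
  semi-measure \<open>m\<close> yields the lower-computable semi-POVM \<open>s \<mapsto> m(s) I\<close>, so universality of \<open>M\<close>
  gives \<open>c\<^sub>1 m(s) I \<le> M(s)\<close>. Conversely \<open>s \<mapsto> tr M(s) / N\<close> is a lower-computable semi-measure:
  the traces of the computable lower approximations of \<open>M(s)\<close> are computable rationals below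
  \<open>tr M(s) / N\<close> converging to it, and their running maxima are monotone. Universality of \<open>m\<close>
  gives \<open>c\<^sub>2 tr M(s) / N \<le> m(s)\<close>, and since every positive semi-definite \<open>A\<close> satisfies
  \<open>A \<le> N tr(A) I\<close>, we get \<open>(c\<^sub>2 / N\<^sup>2) M(s) \<le> m(s) I\<close>.\<close>

section \<open>Recursive functions of fixed arity\<close>

definition recursive_fn :: "nat \<Rightarrow> (nat list \<Rightarrow> nat) \<Rightarrow> bool" where
  "recursive_fn n F \<longleftrightarrow> (\<exists>p. \<forall>xs. length xs = n \<longrightarrow> reval p xs (F xs))"

lemma recursive_fn_cong:
  assumes "recursive_fn n F" and "\<And>xs. length xs = n \<Longrightarrow> F xs = G xs"
  shows "recursive_fn n G"
  using assms unfolding recursive_fn_def by metis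

lemma recursive_fn_zero: "recursive_fn n (\<lambda>xs. 0)"
  unfolding recursive_fn_def by (blast intro: reval.zero)

lemma recursive_fn_proj: "i < n \<Longrightarrow> recursive_fn n (\<lambda>xs. xs ! i)"
  unfolding recursive_fn_def by (auto intro: reval.proj)

lemma recursive_fn_hd: "recursive_fn 1 hd"
  by (rule recursive_fn_cong[OF recursive_fn_proj[of 0]]) (auto simp: length_Suc_conv)

lemma recursive_fn_Suc:
  assumes "recursive_fn n A"
  shows "recursive_fn n (\<lambda>xs. Suc (A xs))"
proof -
  obtain p where p: "\<forall>xs. length xs = n \<longrightarrow> reval p xs (A xs)"
    using assms unfolding recursive_fn_def by blast
  have "reval (Comp Sf [p]) xs (Suc (A xs))" if "length xs = n" for xs
    using p that by (auto intro: reval.comp reval.succ)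
  then show ?thesis unfolding recursive_fn_def by blast
qed

lemma recursive_fn_const: "recursive_fn n (\<lambda>xs. c)"
  by (induction c) (auto intro: recursive_fn_zero recursive_fn_Suc)

lemma recursive_fn_compose:
  assumes F: "recursive_fn m F" and G: "\<And>i. i < m \<Longrightarrow> recursive_fn n (G i)"
  shows "recursive_fn n (\<lambda>xs. F (map (\<lambda>i. G i xs) [0..<m]))"
proof -
  obtain pF where pF: "\<forall>xs. length xs = m \<longrightarrow> reval pF xs (F xs)"
    using F unfolding recursive_fn_def by blast
  obtain ps where ps: "\<And>i xs. i < m \<Longrightarrow> length xs = n \<Longrightarrow> reval (ps i) xs (G i xs)"
    using G unfolding recursive_fn_def by metis
  have "reval (Comp pF (map ps [0..<m])) xs (F (map (\<lambda>i. G i xs) [0..<m]))"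
    if "length xs = n" for xs
  proof (rule reval.comp)
    show "list_all2 (\<lambda>g y. reval g xs y) (map ps [0..<m]) (map (\<lambda>i. G i xs) [0..<m])"
      using ps that by (auto simp: list_all2_conv_all_nth)
  qed (use pF in simp)
  then show ?thesis unfolding recursive_fn_def by blast
qed

lemma recursive_fn_compose1:
  assumes "recursive_fn 1 F" and "recursive_fn n A"
  shows "recursive_fn n (\<lambda>xs. F [A xs])"
  using recursive_fn_compose[of 1 F n "\<lambda>_. A"] assms by simp

lemma recursive_fn_compose2:
  assumes "recursive_fn 2 F" and "recursive_fn n A" and "recursive_fn n B"
  shows "recursive_fn n (\<lambda>xs. F [A xs, B xs])"
  using recursive_fn_compose[of 2 F n "\<lambda>i. if i = 0 then A else B"] assms
  by (simp add: upt_rec)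

lemma recursive_fn_prim:
  assumes F: "recursive_fn n F" and G: "recursive_fn (Suc (Suc n)) G"
    and h0: "\<And>ys. length ys = n \<Longrightarrow> h 0 ys = F ys"
    and hSuc: "\<And>k ys. length ys = n \<Longrightarrow> h (Suc k) ys = G (k # h k ys # ys)"
  shows "recursive_fn (Suc n) (\<lambda>xs. h (hd xs) (tl xs))"
proof -
  obtain pF where pF: "\<forall>xs. length xs = n \<longrightarrow> reval pF xs (F xs)"
    using F unfolding recursive_fn_def by blast
  obtain pG where pG: "\<forall>xs. length xs = Suc (Suc n) \<longrightarrow> reval pG xs (G xs)"
    using G unfolding recursive_fn_def by blast
  have prim: "reval (Prim pF pG) (k # ys) (h k ys)" if ys: "length ys = n" for k ys
  proof (induction k)
    case 0
    then show ?case using pF ys h0 by (simp add: reval.prim0)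
  next
    case (Suc k)
    then show ?case using pG ys hSuc by (simp add: reval.primS)
  qed
  have "reval (Prim pF pG) xs (h (hd xs) (tl xs))" if "length xs = Suc n" for xs
    using that prim by (cases xs) auto
  then show ?thesis unfolding recursive_fn_def by blast
qed

lemma recursive_fn_primrec1:
  assumes G: "recursive_fn 2 G" and f: "\<And>k. f (Suc k) = G [k, f k]"
    and A: "recursive_fn n A"
  shows "recursive_fn n (\<lambda>xs. f (A xs))"
proof -
  have "recursive_fn 1 (\<lambda>xs. f (hd xs))"
    using recursive_fn_prim[of 0 "\<lambda>_. f 0" G "\<lambda>k _. f k"] G f
    by (simp add: recursive_fn_const numeral_2_eq_2)
  from recursive_fn_compose1[OF this A] show ?thesis by simp
qed

lemma recursive_fn_primrec2:
  assumes F: "recursive_fn 1 F" and G: "recursive_fn 3 G"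
    and f0: "\<And>b. f 0 b = F [b]" and fSuc: "\<And>k b. f (Suc k) b = G [k, f k b, b]"
    and A: "recursive_fn n A" and B: "recursive_fn n B"
  shows "recursive_fn n (\<lambda>xs. f (A xs) (B xs))"
proof -
  have single: "ys = [hd ys]" if "length ys = 1" for ys :: "nat list"
    using that by (cases ys) auto
  have "recursive_fn 2 (\<lambda>xs. f (hd xs) (hd (tl xs)))"
    using recursive_fn_prim[of 1 F G "\<lambda>k ys. f k (hd ys)"] F G f0 fSuc single
    by (simp add: numeral_3_eq_3 numeral_2_eq_2)
  from recursive_fn_compose2[OF this A B] show ?thesis by simp
qed

lemma recursive_fn_mu:
  assumes T: "recursive_fn (Suc n) T" and ex: "\<And>xs. length xs = n \<Longrightarrow> \<exists>z. T (z # xs) = 0"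
  shows "recursive_fn n (\<lambda>xs. LEAST z. T (z # xs) = 0)"
proof -
  obtain p where p: "\<forall>xs. length xs = Suc n \<longrightarrow> reval p xs (T xs)"
    using T unfolding recursive_fn_def by blast
  have "reval (Mu p) xs (LEAST z. T (z # xs) = 0)" if xs: "length xs = n" for xs
  proof (rule reval.mu)
    let ?z = "LEAST z. T (z # xs) = 0"
    have "T (?z # xs) = 0" using ex[OF xs] by (rule LeastI_ex)
    moreover have "reval p (?z # xs) (T (?z # xs))" using p xs by simp
    ultimately show "reval p (?z # xs) 0" by simp
    show "\<forall>k<?z. \<exists>y. reval p (k # xs) y \<and> 0 < y"
    proof (intro allI impI exI conjI)
      fix k assume "k < ?z"
      then have "T (k # xs) \<noteq> 0" by (rule not_less_Least)
      then show "0 < T (k # xs)" by simp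
      show "reval p (k # xs) (T (k # xs))" using p xs by simp
    qed
  qed
  then show ?thesis unfolding recursive_fn_def by blast
qed

lemma total_recursive_iff_recursive_fn:
  "total_recursive g \<longleftrightarrow> recursive_fn 1 (\<lambda>xs. g (hd xs))"
proof
  assume "total_recursive g"
  then obtain p where "\<forall>k. reval p [k] (g k)" unfolding total_recursive_def by blast
  then show "recursive_fn 1 (\<lambda>xs. g (hd xs))"
    unfolding recursive_fn_def by (metis One_nat_def length_0_conv length_Suc_conv list.sel(1))
next
  assume "recursive_fn 1 (\<lambda>xs. g (hd xs))"
  then show "total_recursive g"
    unfolding recursive_fn_def total_recursive_def by (metis One_nat_def length_Cons list.sel(1) list.size(3))
qed

lemma recursive_fn_total_recursive:
  "total_recursive g \<Longrightarrow> recursive_fn n A \<Longrightarrow> recursive_fn n (\<lambda>xs. g (A xs))"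
  using recursive_fn_compose1[of "\<lambda>xs. g (hd xs)"] by (simp add: total_recursive_iff_recursive_fn)

lemma recursive_fn_add:
  assumes "recursive_fn n A" and "recursive_fn n B"
  shows "recursive_fn n (\<lambda>xs. A xs + B xs)"
proof (rule recursive_fn_primrec2[where f = "(+)" and F = "\<lambda>xs. xs ! 0" and G = "\<lambda>xs. Suc (xs ! 1)"])
  show "recursive_fn 1 (\<lambda>xs. xs ! 0)" by (rule recursive_fn_proj) simp
  show "recursive_fn 3 (\<lambda>xs. Suc (xs ! 1))" by (intro recursive_fn_Suc recursive_fn_proj) simp
qed (use assms in simp_all)

lemma recursive_fn_mult:
  assumes "recursive_fn n A" and "recursive_fn n B"
  shows "recursive_fn n (\<lambda>xs. A xs * B xs)"
proof (rule recursive_fn_primrec2[where f = "(*)" and F = "\<lambda>xs. 0" and G = "\<lambda>xs. xs ! 2 + xs ! 1"])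
  show "recursive_fn 1 (\<lambda>xs. 0)" by (rule recursive_fn_zero)
  show "recursive_fn 3 (\<lambda>xs. xs ! 2 + xs ! 1)" by (intro recursive_fn_add recursive_fn_proj) simp_all
qed (use assms in simp_all)

lemma recursive_fn_pred:
  assumes "recursive_fn n A"
  shows "recursive_fn n (\<lambda>xs. A xs - 1)"
proof (rule recursive_fn_primrec1[where f = "\<lambda>k. k - 1" and G = "\<lambda>xs. xs ! 0"])
  show "recursive_fn 2 (\<lambda>xs. xs ! 0)" by (rule recursive_fn_proj) simp
qed (use assms in simp_all)

lemma recursive_fn_diff:
  assumes "recursive_fn n A" and "recursive_fn n B"
  shows "recursive_fn n (\<lambda>xs. A xs - B xs)"
proof -
  have "recursive_fn n (\<lambda>xs. (\<lambda>k b. b - k) (B xs) (A xs))"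
  proof (rule recursive_fn_primrec2[where f = "\<lambda>k b. b - k" and F = "\<lambda>xs. xs ! 0"
        and G = "\<lambda>xs. xs ! 1 - 1"])
    show "recursive_fn 1 (\<lambda>xs. xs ! 0)" by (rule recursive_fn_proj) simp
    show "recursive_fn 3 (\<lambda>xs. xs ! 1 - 1)" by (intro recursive_fn_pred recursive_fn_proj) simp
  qed (use assms in simp_all)
  then show ?thesis by simp
qed

lemma recursive_fn_triangle:
  assumes "recursive_fn n A"
  shows "recursive_fn n (\<lambda>xs. triangle (A xs))"
proof (rule recursive_fn_primrec1[where f = triangle and G = "\<lambda>xs. xs ! 1 + Suc (xs ! 0)"])
  show "recursive_fn 2 (\<lambda>xs. xs ! 1 + Suc (xs ! 0))"
    by (intro recursive_fn_add recursive_fn_Suc recursive_fn_proj) simp_all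
qed (use assms in simp_all)

lemma recursive_fn_mod2:
  assumes "recursive_fn n A"
  shows "recursive_fn n (\<lambda>xs. A xs mod 2)"
proof (rule recursive_fn_primrec1[where f = "\<lambda>k. k mod 2" and G = "\<lambda>xs. 1 - xs ! 1"])
  show "recursive_fn 2 (\<lambda>xs. 1 - xs ! 1)"
    by (intro recursive_fn_diff recursive_fn_const recursive_fn_proj) simp
qed (use assms in \<open>simp_all add: mod_Suc\<close>)

lemma recursive_fn_div2:
  assumes "recursive_fn n A"
  shows "recursive_fn n (\<lambda>xs. A xs div 2)"
proof (rule recursive_fn_primrec1[where f = "\<lambda>k. k div 2" and G = "\<lambda>xs. xs ! 1 + xs ! 0 mod 2"])
  show "recursive_fn 2 (\<lambda>xs. xs ! 1 + xs ! 0 mod 2)"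
    by (intro recursive_fn_add recursive_fn_mod2 recursive_fn_proj) simp_all
qed (use assms in \<open>simp_all add: div_Suc mod_Suc\<close>)

lemma recursive_fn_if_zero:
  assumes "recursive_fn n A" and "recursive_fn n B" and "recursive_fn n C"
  shows "recursive_fn n (\<lambda>xs. if A xs = 0 then B xs else C xs)"
proof -
  have "recursive_fn n (\<lambda>xs. B xs * (1 - A xs) + C xs * (1 - (1 - A xs)))"
    using assms by (intro recursive_fn_add recursive_fn_mult recursive_fn_diff recursive_fn_const)
  then show ?thesis by (rule recursive_fn_cong) auto
qed

lemma recursive_fn_if_le:
  assumes "recursive_fn n A" and "recursive_fn n B" and "recursive_fn n C" and "recursive_fn n D"
  shows "recursive_fn n (\<lambda>xs. if A xs \<le> B xs then C xs else D xs)"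
proof -
  have "recursive_fn n (\<lambda>xs. if A xs - B xs = 0 then C xs else D xs)"
    using assms by (intro recursive_fn_if_zero recursive_fn_diff)
  then show ?thesis by (rule recursive_fn_cong) auto
qed

lemma recursive_fn_if_even:
  assumes "recursive_fn n A" and "recursive_fn n B" and "recursive_fn n C"
  shows "recursive_fn n (\<lambda>xs. if even (A xs) then B xs else C xs)"
proof -
  have "recursive_fn n (\<lambda>xs. if A xs mod 2 = 0 then B xs else C xs)"
    using assms by (intro recursive_fn_if_zero recursive_fn_mod2)
  then show ?thesis by (rule recursive_fn_cong) auto
qed

lemma recursive_fn_if_const:
  "recursive_fn n B \<Longrightarrow> recursive_fn n C \<Longrightarrow> recursive_fn n (\<lambda>xs. if P then B xs else C xs)"
  by (cases P) auto

lemma recursive_fn_sum: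
  "(\<And>i. i < K \<Longrightarrow> recursive_fn n (F i)) \<Longrightarrow> recursive_fn n (\<lambda>xs. \<Sum>i<(K::nat). F i xs)"
  by (induction K) (auto intro: recursive_fn_add recursive_fn_const)

lemma recursive_fn_prod:
  "(\<And>i. i < K \<Longrightarrow> recursive_fn n (F i)) \<Longrightarrow> recursive_fn n (\<lambda>xs. \<Prod>i<(K::nat). F i xs)"
  by (induction K) (auto intro: recursive_fn_mult recursive_fn_const)

lemma recursive_fn_prod_encode:
  assumes "recursive_fn n A" and "recursive_fn n B"
  shows "recursive_fn n (\<lambda>xs. prod_encode (A xs, B xs))"
proof -
  have "recursive_fn n (\<lambda>xs. triangle (A xs + B xs) + A xs)"
    using assms by (intro recursive_fn_add recursive_fn_triangle)
  then show ?thesis by (rule recursive_fn_cong) (simp add: prod_encode_def)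
qed

text \<open>The least \<open>z\<close> with \<open>k < triangle (Suc z)\<close>, written as a zero test so that it is a \<open>\<mu>\<close>-search.\<close>

definition triangle_root :: "nat \<Rightarrow> nat" where
  "triangle_root k = (LEAST z. Suc k - triangle (Suc z) = 0)"

lemma triangle_root_bounds: "triangle (triangle_root k) \<le> k \<and> k < triangle (Suc (triangle_root k))"
proof -
  have "Suc k - triangle (Suc k) = 0"
    by (induction k) auto
  then have upper: "Suc k - triangle (Suc (triangle_root k)) = 0"
    unfolding triangle_root_def by (rule LeastI)
  have "triangle (triangle_root k) \<le> k"
  proof (cases "triangle_root k")
    case (Suc z)
    then have "z < triangle_root k" by simp
    then have "Suc k - triangle (Suc z) \<noteq> 0"
      unfolding triangle_root_def by (rule not_less_Least)
    then show ?thesis using Suc by simp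
  qed simp
  with upper show ?thesis by simp
qed

lemma prod_decode_triangle_root:
  "prod_decode k = (k - triangle (triangle_root k), triangle_root k - (k - triangle (triangle_root k)))"
proof -
  have "prod_encode (k - triangle (triangle_root k), triangle_root k - (k - triangle (triangle_root k))) = k"
    using triangle_root_bounds[of k] by (simp add: prod_encode_def)
  then show ?thesis by (metis prod_encode_inverse)
qed

lemma recursive_fn_triangle_root:
  assumes "recursive_fn n A"
  shows "recursive_fn n (\<lambda>xs. triangle_root (A xs))"
proof -
  have "recursive_fn 1 (\<lambda>xs. LEAST z. Suc ((z # xs) ! 1) - triangle (Suc ((z # xs) ! 0)) = 0)"
  proof (rule recursive_fn_mu)
    show "recursive_fn (Suc 1) (\<lambda>zs. Suc (zs ! 1) - triangle (Suc (zs ! 0)))"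
      by (intro recursive_fn_diff recursive_fn_Suc recursive_fn_triangle recursive_fn_proj) auto
    show "\<exists>z. Suc ((z # xs) ! 1) - triangle (Suc ((z # xs) ! 0)) = 0" for xs :: "nat list"
      by (rule exI[of _ "xs ! 0"]) simp
  qed
  then have "recursive_fn 1 (\<lambda>xs. triangle_root (hd xs))"
    by (rule recursive_fn_cong) (auto simp: triangle_root_def length_Suc_conv)
  from recursive_fn_compose1[OF this assms] show ?thesis by simp
qed

lemma recursive_fn_fst_prod_decode:
  assumes "recursive_fn n A"
  shows "recursive_fn n (\<lambda>xs. fst (prod_decode (A xs)))"
proof -
  have "recursive_fn n (\<lambda>xs. A xs - triangle (triangle_root (A xs)))"
    using assms by (intro recursive_fn_diff recursive_fn_triangle recursive_fn_triangle_root)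
  then show ?thesis by (rule recursive_fn_cong) (simp add: prod_decode_triangle_root)
qed

lemma recursive_fn_snd_prod_decode:
  assumes "recursive_fn n A"
  shows "recursive_fn n (\<lambda>xs. snd (prod_decode (A xs)))"
proof -
  have "recursive_fn n (\<lambda>xs. triangle_root (A xs) - (A xs - triangle (triangle_root (A xs))))"
    using assms by (intro recursive_fn_diff recursive_fn_triangle recursive_fn_triangle_root)
  then show ?thesis by (rule recursive_fn_cong) (simp add: prod_decode_triangle_root)
qed

section \<open>Quadratic forms and the Loewner order\<close>

definition qform :: "nat \<Rightarrow> cmat \<Rightarrow> (nat \<Rightarrow> complex) \<Rightarrow> real" where
  "qform N A x = Re (\<Sum>i<N. \<Sum>j<N. cnj (x i) * A i j * x j)"

lemma psd_iff_qform: "psd N A \<longleftrightarrow> hermitian N A \<and> (\<forall>x. 0 \<le> qform N A x)"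
  unfolding psd_def qform_def by simp

lemma qform_diff: "qform N (\<lambda>i j. B i j - A i j) x = qform N B x - qform N A x"
  unfolding qform_def by (simp add: right_diff_distrib left_diff_distrib sum_subtractf)

lemma loewner_le_iff_qform:
  "loewner_le N A B \<longleftrightarrow> hermitian N (\<lambda>i j. B i j - A i j) \<and> (\<forall>x. qform N A x \<le> qform N B x)"
  unfolding loewner_le_def psd_iff_qform qform_diff by simp

lemma qform_mscale: "qform N (mscale (complex_of_real c) A) x = c * qform N A x"
proof -
  have "(\<Sum>i<N. \<Sum>j<N. cnj (x i) * (complex_of_real c * A i j) * x j)
      = complex_of_real c * (\<Sum>i<N. \<Sum>j<N. cnj (x i) * A i j * x j)"
    by (simp add: sum_distrib_left algebra_simps)
  then show ?thesis unfolding qform_def mscale_def by simp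
qed

lemma qform_idm: "qform N idm x = (\<Sum>i<N. (cmod (x i))\<^sup>2)"
proof -
  have "(\<Sum>i<N. \<Sum>j<N. cnj (x i) * idm i j * x j) = (\<Sum>i<N. cnj (x i) * x i)"
    unfolding idm_def by (simp add: if_distrib if_distribR cong: if_cong)
  also have "\<dots> = (\<Sum>i<N. complex_of_real ((cmod (x i))\<^sup>2))"
    by (intro sum.cong refl, subst complex_norm_square, rule mult.commute)
  also have "\<dots> = complex_of_real (\<Sum>i<N. (cmod (x i))\<^sup>2)"
    by (simp only: of_real_sum)
  finally show ?thesis unfolding qform_def by simp
qed

lemma qform_idm_nonneg: "0 \<le> qform N idm x"
  unfolding qform_idm by (simp add: sum_nonneg)

lemma hermitian_cong:
  "(\<And>i j. i < N \<Longrightarrow> j < N \<Longrightarrow> A i j = B i j) \<Longrightarrow> hermitian N A = hermitian N B"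
  unfolding hermitian_def by auto

lemma qform_cong:
  "(\<And>i j. i < N \<Longrightarrow> j < N \<Longrightarrow> A i j = B i j) \<Longrightarrow> qform N A x = qform N B x"
  unfolding qform_def by (intro arg_cong[where f = Re] sum.cong refl) auto

lemma loewner_le_cong:
  assumes "\<And>i j. i < N \<Longrightarrow> j < N \<Longrightarrow> A i j = A' i j"
  shows "loewner_le N A B = loewner_le N A' B"
proof -
  have "hermitian N (\<lambda>i j. B i j - A i j) = hermitian N (\<lambda>i j. B i j - A' i j)"
    by (rule hermitian_cong) (simp add: assms)
  moreover have "qform N A x = qform N A' x" for x
    by (rule qform_cong) (rule assms)
  ultimately show ?thesis unfolding loewner_le_iff_qform by simp
qed

lemma hermitian_idm: "hermitian N idm"
  unfolding hermitian_def idm_def by simp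

lemma hermitian_mscale:
  assumes "hermitian N A"
  shows "hermitian N (mscale (complex_of_real c) A)"
  unfolding hermitian_def mscale_def
proof (intro allI impI)
  fix i j assume "i < N" "j < N"
  with assms have "A j i = cnj (A i j)" unfolding hermitian_def by blast
  then show "complex_of_real c * A j i = cnj (complex_of_real c * A i j)" by simp
qed

lemma hermitian_diff:
  assumes "hermitian N A" and "hermitian N B"
  shows "hermitian N (\<lambda>i j. B i j - A i j)"
  unfolding hermitian_def
proof (intro allI impI)
  fix i j assume "i < N" "j < N"
  with assms have "A j i = cnj (A i j)" "B j i = cnj (B i j)" unfolding hermitian_def by blast+
  then show "B j i - A j i = cnj (B i j - A i j)" by simp
qed

lemma mscale_mscale: "mscale a (mscale b A) = mscale (a * b) A"
  unfolding mscale_def by (simp add: mult.assoc)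

lemma mscale_one: "mscale 1 A = A"
  unfolding mscale_def by simp

lemma loewner_le_trans:
  assumes AB: "loewner_le N A B" and BC: "loewner_le N B C"
  shows "loewner_le N A C"
proof -
  have "hermitian N (\<lambda>i j. C i j - A i j)"
    unfolding hermitian_def
  proof (intro allI impI)
    fix i j assume "i < N" "j < N"
    with AB BC have "B j i - A j i = cnj (B i j - A i j)" "C j i - B j i = cnj (C i j - B i j)"
      unfolding loewner_le_iff_qform hermitian_def by blast+
    then show "C j i - A j i = cnj (C i j - A i j)"
      by (metis complex_cnj_add diff_add_eq diff_diff_eq2 diff_add_cancel)
  qed
  with AB BC show ?thesis unfolding loewner_le_iff_qform by (meson order_trans)
qed

lemma loewner_le_mscale:
  assumes "0 \<le> c" and "loewner_le N A B"
  shows "loewner_le N (mscale (complex_of_real c) A) (mscale (complex_of_real c) B)"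
proof -
  have "hermitian N (\<lambda>i j. mscale (complex_of_real c) B i j - mscale (complex_of_real c) A i j)"
    using assms(2) hermitian_mscale[of N "\<lambda>i j. B i j - A i j" c]
    unfolding loewner_le_iff_qform mscale_def by (simp add: right_diff_distrib)
  with assms show ?thesis
    unfolding loewner_le_iff_qform qform_mscale by (simp add: mult_left_mono)
qed

lemma loewner_le_mscale_idm:
  "a \<le> b \<Longrightarrow> loewner_le N (mscale (complex_of_real a) idm) (mscale (complex_of_real b) idm)"
  unfolding loewner_le_iff_qform qform_mscale
  by (simp add: hermitian_diff hermitian_mscale hermitian_idm mult_right_mono qform_idm_nonneg)

lemma psd_mscale_idm: "0 \<le> a \<Longrightarrow> psd N (mscale (complex_of_real a) idm)"
  unfolding psd_iff_qform qform_mscale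
  by (simp add: hermitian_mscale hermitian_idm qform_idm_nonneg)

lemma qform_basis:
  assumes "i < N"
  shows "qform N A (\<lambda>k. if k = i then 1 else 0) = Re (A i i)"
proof -
  have "cnj (if k = i then 1 else 0) * A k l * (if l = i then 1 else 0)
      = (if l = i then if k = i then A i i else 0 else 0)" for k l
    by simp
  then show ?thesis using assms unfolding qform_def by simp
qed

lemma psd_diag_nonneg:
  assumes "psd N A" and "i < N"
  shows "0 \<le> Re (A i i)"
  using assms qform_basis[OF assms(2), of A] unfolding psd_iff_qform by metis

lemma psd_trace_nonneg: "psd N A \<Longrightarrow> 0 \<le> (\<Sum>i<N. Re (A i i))"
  by (rule sum_nonneg) (simp add: psd_diag_nonneg)

lemma loewner_le_diag:
  assumes "loewner_le N A B" and "i < N"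
  shows "Re (A i i) \<le> Re (B i i)"
  using assms qform_basis[OF assms(2), of A] qform_basis[OF assms(2), of B]
  unfolding loewner_le_iff_qform by metis

lemma qform_two_basis:
  assumes "i < N" and "j < N" and "i \<noteq> j"
  shows "qform N A (\<lambda>k. (if k = i then 1 else 0) + (if k = j then u else 0))
       = Re (A i i + A i j * u + cnj u * A j i + cnj u * A j j * u)"
proof -
  have "cnj ((if k = i then 1 else 0) + (if k = j then u else 0)) * A k l *
          ((if l = i then 1 else 0) + (if l = j then u else 0))
     = (if l = i then if k = i then A i i else 0 else 0)
     + (if l = j then if k = i then A i j * u else 0 else 0)
     + (if l = i then if k = j then cnj u * A j i else 0 else 0)
     + (if l = j then if k = j then cnj u * A j j * u else 0 else 0)" for k l
    using assms(3) by (cases "k = i"; cases "k = j"; cases "l = i"; cases "l = j") auto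
  then show ?thesis using assms unfolding qform_def by (simp add: sum.distrib)
qed

text \<open>Test the form on \<open>e\<^sub>i + u e\<^sub>j\<close> with the unimodular \<open>u\<close> that makes the cross terms real and
  negative.\<close>

lemma psd_offdiag_bound:
  assumes A: "psd N A" and ij: "i < N" "j < N"
  shows "2 * cmod (A i j) \<le> Re (A i i) + Re (A j j)"
proof (cases "i = j")
  case True
  have "A i i = cnj (A i i)" using A ij unfolding psd_def hermitian_def by blast
  then have "Im (A i i) = 0" by (metis complex_cnj_cancel_iff complex.sel(2) cnj.sel(2) neg_equal_zero)
  then have "cmod (A i i) = \<bar>Re (A i i)\<bar>" by (simp add: cmod_def)
  then show ?thesis using True psd_diag_nonneg[OF A ij(1)] by simp
next
  case False
  let ?a = "A i j"
  define u where "u = (if ?a = 0 then 0 else - cnj ?a / complex_of_real (cmod ?a))"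
  have h: "A j i = cnj ?a" using A ij unfolding psd_def hermitian_def by blast
  have "0 \<le> qform N A (\<lambda>k. (if k = i then 1 else 0) + (if k = j then u else 0))"
    using A unfolding psd_iff_qform by blast
  also have "\<dots> = Re (A i i + ?a * u + cnj u * A j i + cnj u * A j j * u)"
    by (rule qform_two_basis[OF ij False])
  also have "\<dots> \<le> Re (A i i) + Re (A j j) - 2 * cmod ?a"
  proof (cases "?a = 0")
    case True
    then show ?thesis using psd_diag_nonneg[OF A ij(2)] by (simp add: u_def)
  next
    case nz: False
    have sq: "?a * cnj ?a = complex_of_real (cmod ?a) * complex_of_real (cmod ?a)"
      by (simp add: complex_norm_square[symmetric] power2_eq_square)
    have au: "?a * u = - complex_of_real (cmod ?a)"
      using nz sq by (simp add: u_def field_simps)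
    then have ua: "cnj u * A j i = - complex_of_real (cmod ?a)"
      using h by (metis complex_cnj_complex_of_real complex_cnj_minus complex_cnj_mult mult.commute)
    have "cnj u * u = 1"
      using nz sq by (simp add: u_def field_simps mult.commute)
    moreover have "cnj u * A j j * u = A j j * (cnj u * u)" by (simp only: mult_ac)
    ultimately have uu: "cnj u * A j j * u = A j j" by simp
    show ?thesis unfolding au ua uu by simp
  qed
  finally show ?thesis by simp
qed

lemma sum_abs_mult_le_sum_squares:
  fixes a :: "nat \<Rightarrow> real"
  shows "(\<Sum>i<N. \<Sum>j<N. \<bar>a i\<bar> * \<bar>a j\<bar>) \<le> real N * (\<Sum>i<N. (a i)\<^sup>2)"
proof -
  have "\<bar>a i\<bar> * \<bar>a j\<bar> \<le> ((a i)\<^sup>2 + (a j)\<^sup>2) / 2" for i j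
    using zero_le_power2[of "\<bar>a i\<bar> - \<bar>a j\<bar>"] by (simp add: power2_eq_square algebra_simps)
  then have "(\<Sum>i<N. \<Sum>j<N. \<bar>a i\<bar> * \<bar>a j\<bar>)
      \<le> (\<Sum>i<N. \<Sum>j<N. ((a i)\<^sup>2 + (a j)\<^sup>2) / 2)"
    by (intro sum_mono)
  also have "\<dots> = real N * (\<Sum>i<N. (a i)\<^sup>2)"
    by (simp add: sum.distrib add_divide_distrib sum_divide_distrib[symmetric]
        sum_distrib_left sum_distrib_right)
  finally show ?thesis .
qed

lemma psd_qform_le_trace:
  assumes A: "psd N A"
  shows "qform N A x \<le> real N * (\<Sum>k<N. Re (A k k)) * (\<Sum>i<N. (cmod (x i))\<^sup>2)"
proof -
  let ?T = "\<Sum>k<N. Re (A k k)"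
  have diag_le: "Re (A i i) \<le> ?T" if "i < N" for i
    using that psd_diag_nonneg[OF A] by (intro member_le_sum) auto
  have entry_le: "cmod (A i j) \<le> ?T" if "i < N" "j < N" for i j
    using psd_offdiag_bound[OF A that] diag_le[OF that(1)] diag_le[OF that(2)] by linarith
  have "qform N A x \<le> cmod (\<Sum>i<N. \<Sum>j<N. cnj (x i) * A i j * x j)"
    unfolding qform_def by (rule complex_Re_le_cmod)
  also have "\<dots> \<le> (\<Sum>i<N. \<Sum>j<N. cmod (cnj (x i) * A i j * x j))"
    by (rule order_trans[OF norm_sum sum_mono]) (rule norm_sum)
  also have "\<dots> \<le> (\<Sum>i<N. \<Sum>j<N. ?T * (\<bar>cmod (x i)\<bar> * \<bar>cmod (x j)\<bar>))"
    using entry_le by (intro sum_mono) (simp add: norm_mult mult_left_mono mult_ac)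
  also have "\<dots> = ?T * (\<Sum>i<N. \<Sum>j<N. \<bar>cmod (x i)\<bar> * \<bar>cmod (x j)\<bar>)"
    by (simp add: sum_distrib_left)
  also have "\<dots> \<le> ?T * (real N * (\<Sum>i<N. (cmod (x i))\<^sup>2))"
    using psd_diag_nonneg[OF A] sum_abs_mult_le_sum_squares[of "\<lambda>i. cmod (x i)" N]
    by (intro mult_left_mono sum_nonneg) auto
  finally show ?thesis by (simp add: algebra_simps)
qed

lemma psd_le_trace_idm:
  assumes A: "psd N A"
  shows "loewner_le N A (mscale (complex_of_real (real N * (\<Sum>k<N. Re (A k k)))) idm)"
  unfolding loewner_le_iff_qform qform_mscale qform_idm
proof (intro conjI allI)
  show "hermitian N (\<lambda>i j. mscale (complex_of_real (real N * (\<Sum>k<N. Re (A k k)))) idm i j - A i j)"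
    using A unfolding psd_def by (intro hermitian_diff hermitian_mscale hermitian_idm) blast
qed (use psd_qform_le_trace[OF A] in simp)

lemma psd_mscale_le_mscale_idm:
  assumes A: "psd N A" and "0 \<le> c" and "c * (real N * (\<Sum>k<N. Re (A k k))) \<le> b"
  shows "loewner_le N (mscale (complex_of_real c) A) (mscale (complex_of_real b) idm)"
proof -
  have "loewner_le N (mscale (complex_of_real c) A)
      (mscale (complex_of_real (c * (real N * (\<Sum>k<N. Re (A k k))))) idm)"
    using loewner_le_mscale[OF \<open>0 \<le> c\<close> psd_le_trace_idm[OF A]] by (simp add: mscale_mscale)
  then show ?thesis using loewner_le_mscale_idm[OF assms(3)] by (rule loewner_le_trans)
qed

section \<open>Semi-measures as scalar semi-POVMs\<close>

lemma recursive_fn_list_encode: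
  "(\<And>k. k \<in> set ks \<Longrightarrow> recursive_fn n (G k)) \<Longrightarrow>
    recursive_fn n (\<lambda>xs. list_encode (map (\<lambda>k. G k xs) ks))"
  by (induction ks) (auto intro!: recursive_fn_const recursive_fn_Suc recursive_fn_prod_encode)

lemma prod_decode_0: "prod_decode 0 = (0, 0)"
  using prod_encode_inverse[of "(0, 0)"] by (simp add: prod_encode_def)

lemma rat_dec_0: "rat_dec 0 = 0"
  unfolding rat_dec_def by (simp add: prod_decode_0 Fract_of_int_quotient)

lemma gauss_dec_0: "gauss_dec 0 = 0"
  unfolding gauss_dec_def by (simp add: prod_decode_0 rat_dec_0 complex_eq_iff)

lemma gauss_dec_real: "gauss_dec (prod_encode (d, 0)) = complex_of_real (real_of_rat (rat_dec d))"
  unfolding gauss_dec_def by (simp add: rat_dec_0 complex_eq_iff)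

definition diag_code :: "nat \<Rightarrow> nat \<Rightarrow> nat" where
  "diag_code N d = list_encode (map (\<lambda>k. if k div N = k mod N then prod_encode (d, 0) else 0) [0..<N * N])"

lemma gmat_dec_diag_code:
  assumes "i < N" and "j < N"
  shows "gmat_dec N (diag_code N d) i j = (if i = j then complex_of_real (real_of_rat (rat_dec d)) else 0)"
proof -
  have "i * N + j < Suc i * N" using assms by simp
  also have "\<dots> \<le> N * N" using assms by (intro mult_le_mono1) simp
  finally have "i * N + j < N * N" .
  moreover have "(i * N + j) div N = i" "(i * N + j) mod N = j" using assms by auto
  ultimately show ?thesis
    using assms unfolding gmat_dec_def diag_code_def by (simp add: gauss_dec_real gauss_dec_0)
qed

lemma recursive_fn_diag_code: "recursive_fn n A \<Longrightarrow> recursive_fn n (\<lambda>xs. diag_code N (A xs))"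
  unfolding diag_code_def
  by (intro recursive_fn_list_encode recursive_fn_if_const recursive_fn_prod_encode recursive_fn_const)

lemma semi_povm_scaled_idm:
  assumes m: "semi_measure m"
  shows "semi_povm N (\<lambda>s. mscale (complex_of_real (m s)) idm)"
  unfolding semi_povm_def
proof (intro conjI allI impI)
  show "psd N (mscale (complex_of_real (m s)) idm)" for s
    using m unfolding semi_measure_def by (intro psd_mscale_idm) blast
  fix F :: "bool list set" assume "finite F"
  then have "(\<Sum>s\<in>F. m s) \<le> 1" using m unfolding semi_measure_def by blast
  then have "loewner_le N (mscale (complex_of_real (\<Sum>s\<in>F. m s)) idm) (mscale 1 idm)"
    using loewner_le_mscale_idm[of "\<Sum>s\<in>F. m s" 1 N] by simp
  moreover have "msum F (\<lambda>s. mscale (complex_of_real (m s)) idm)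
      = mscale (complex_of_real (\<Sum>s\<in>F. m s)) idm"
    unfolding msum_def mscale_def by (auto simp: sum_distrib_right)
  ultimately show "loewner_le N (msum F (\<lambda>s. mscale (complex_of_real (m s)) idm)) idm"
    by (simp add: mscale_one)
qed

lemma lower_computable_semi_povm_scaled_idm:
  assumes "lower_computable_semi_measure m"
  shows "lower_computable_semi_povm N (\<lambda>s. mscale (complex_of_real (m s)) idm)"
proof -
  obtain f g where g: "total_recursive g"
    and f: "\<And>n s. f n s = rat_dec (g (prod_encode (n, str_enc s)))"
    and lim: "\<And>s. (\<lambda>n. real_of_rat (f n s)) \<longlonglongrightarrow> m s"
    and mono: "\<And>n s. f n s \<le> f (Suc n) s"
    using assms unfolding lower_computable_semi_measure_def computable_rat_fun_def by metis
  have below: "real_of_rat (f n s) \<le> m s" for n s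
    using mono by (intro incseq_le[OF _ lim] incseq_SucI) (simp add: of_rat_less_eq)
  define F where "F n s = gmat_dec N (diag_code N (g (prod_encode (n, str_enc s))))" for n s
  have F_eq: "F n s i j = mscale (complex_of_real (real_of_rat (f n s))) idm i j"
    if "i < N" "j < N" for n s i j
    using that unfolding F_def f mscale_def idm_def by (simp add: gmat_dec_diag_code)
  have "computable_gmat_fun N F"
    unfolding computable_gmat_fun_def F_def total_recursive_iff_recursive_fn
    by (intro exI[of _ "\<lambda>k. diag_code N (g k)"] conjI allI refl recursive_fn_diag_code
        recursive_fn_total_recursive[OF g] recursive_fn_hd)
  moreover have "hermitian N (F n s)" for n s
  proof -
    have "hermitian N (F n s) = hermitian N (mscale (complex_of_real (real_of_rat (f n s))) idm)"
      by (rule hermitian_cong) (rule F_eq)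
    then show ?thesis using hermitian_mscale[OF hermitian_idm] by blast
  qed
  moreover have "(\<lambda>n. F n s i j) \<longlonglongrightarrow> mscale (complex_of_real (m s)) idm i j"
    if "i < N" "j < N" for s i j
    unfolding F_eq[OF that] mscale_def by (intro tendsto_mult tendsto_of_real lim tendsto_const)
  moreover have "loewner_le N (F n s) (mscale (complex_of_real (m s)) idm)" for n s
  proof -
    have "loewner_le N (F n s) (mscale (complex_of_real (m s)) idm)
        = loewner_le N (mscale (complex_of_real (real_of_rat (f n s))) idm) (mscale (complex_of_real (m s)) idm)"
      by (rule loewner_le_cong) (rule F_eq)
    then show ?thesis using loewner_le_mscale_idm[OF below] by blast
  qed
  ultimately show ?thesis
    unfolding lower_computable_semi_povm_def
    using semi_povm_scaled_idm assms unfolding lower_computable_semi_measure_def by blast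
qed

section \<open>The normalized trace of a semi-POVM\<close>

text \<open>Unlike \<open>list_decode\<close>, this is a fixed-depth composition of decoding steps for each \<open>j\<close>, hence
  recursive.\<close>

primrec list_code_nth :: "nat \<Rightarrow> nat \<Rightarrow> nat" where
  "list_code_nth 0 c = (if c = 0 then 0 else fst (prod_decode (c - 1)))"
| "list_code_nth (Suc j) c = (if c = 0 then 0 else list_code_nth j (snd (prod_decode (c - 1))))"

lemma list_code_nth_eq:
  "list_code_nth j c = (if j < length (list_decode c) then list_decode c ! j else 0)"
proof (induction j arbitrary: c)
  case 0
  show ?case by (cases c) (auto split: prod.split)
next
  case (Suc j)
  show ?case using Suc.IH by (cases c) (auto split: prod.split)
qed

lemma recursive_fn_list_code_nth:
  "recursive_fn n A \<Longrightarrow> recursive_fn n (\<lambda>xs. list_code_nth j (A xs))"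
proof (induction j arbitrary: A)
  case 0
  then show ?case
    unfolding list_code_nth.simps
    by (intro recursive_fn_if_zero recursive_fn_const recursive_fn_fst_prod_decode recursive_fn_pred)
next
  case (Suc j)
  have "recursive_fn n (\<lambda>xs. list_code_nth j (snd (prod_decode (A xs - 1))))"
    by (intro Suc.IH recursive_fn_snd_prod_decode recursive_fn_pred Suc.prems)
  then show ?case
    unfolding list_code_nth.simps by (intro recursive_fn_if_zero recursive_fn_const Suc.prems)
qed

text \<open>A rational code \<open>prod_encode (a, b)\<close> stands for \<open>int_decode a / b\<close>, and for \<open>0\<close> when \<open>b = 0\<close>;
  the following natural numbers write it as \<open>(pos - neg) / den\<close> with \<open>den > 0\<close>.\<close>

definition rat_code_den :: "nat \<Rightarrow> nat" where
  "rat_code_den r = (if snd (prod_decode r) = 0 then 1 else snd (prod_decode r))"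

definition rat_code_pos :: "nat \<Rightarrow> nat" where
  "rat_code_pos r = (if snd (prod_decode r) = 0 then 0
     else if even (fst (prod_decode r)) then fst (prod_decode r) div 2 else 0)"

definition rat_code_neg :: "nat \<Rightarrow> nat" where
  "rat_code_neg r = (if snd (prod_decode r) = 0 then 0
     else if even (fst (prod_decode r)) then 0 else fst (prod_decode r) div 2 + 1)"

lemma rat_code_den_pos: "0 < rat_code_den r"
  unfolding rat_code_den_def by simp

lemma rat_dec_eq_rat_code_parts:
  "real_of_rat (rat_dec r) = (real (rat_code_pos r) - real (rat_code_neg r)) / real (rat_code_den r)"
proof (cases "prod_decode r")
  case (Pair a b)
  have "int_decode a = (if even a then int (a div 2) else - int (a div 2) - 1)"
    unfolding int_decode_def sum_decode_def by simp
  then show ?thesis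
    using Pair unfolding rat_dec_def rat_code_pos_def rat_code_neg_def rat_code_den_def
    by (auto simp: Fract_of_int_quotient of_rat_divide)
qed

lemma recursive_fn_rat_code_parts:
  assumes "recursive_fn n A"
  shows "recursive_fn n (\<lambda>xs. rat_code_den (A xs))"
    and "recursive_fn n (\<lambda>xs. rat_code_pos (A xs))"
    and "recursive_fn n (\<lambda>xs. rat_code_neg (A xs))"
  unfolding rat_code_den_def rat_code_pos_def rat_code_neg_def
  by (intro recursive_fn_if_zero recursive_fn_if_even recursive_fn_const recursive_fn_add
      recursive_fn_div2 recursive_fn_fst_prod_decode recursive_fn_snd_prod_decode assms)+

definition diag_rat_code :: "nat \<Rightarrow> nat \<Rightarrow> nat \<Rightarrow> nat" where
  "diag_rat_code N c i = fst (prod_decode (list_code_nth (i * N + i) c))"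

lemma Re_gmat_dec_diag:
  assumes "i < N"
  shows "Re (gmat_dec N c i i) = real_of_rat (rat_dec (diag_rat_code N c i))"
proof -
  have "gmat_dec N c i i = gauss_dec (list_code_nth (i * N + i) c)"
    unfolding gmat_dec_def list_code_nth_eq using assms by (simp add: Let_def gauss_dec_0)
  then show ?thesis
    unfolding diag_rat_code_def gauss_dec_def by (simp split: prod.split)
qed

definition trace_den :: "nat \<Rightarrow> nat \<Rightarrow> nat" where
  "trace_den N c = (\<Prod>i<N. rat_code_den (diag_rat_code N c i))"

definition trace_cofactor :: "nat \<Rightarrow> nat \<Rightarrow> nat \<Rightarrow> nat" where
  "trace_cofactor N c i = (\<Prod>j<N. if j = i then 1 else rat_code_den (diag_rat_code N c j))"

definition ratio_of_code :: "nat \<Rightarrow> real" where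
  "ratio_of_code u = real (fst (prod_decode u)) / real (snd (prod_decode u))"

definition trace_code :: "nat \<Rightarrow> nat \<Rightarrow> nat" where
  "trace_code N c = prod_encode
     ((\<Sum>i<N. rat_code_pos (diag_rat_code N c i) * trace_cofactor N c i)
        - (\<Sum>i<N. rat_code_neg (diag_rat_code N c i) * trace_cofactor N c i),
      N * trace_den N c)"

lemma trace_den_pos: "0 < trace_den N c"
  unfolding trace_den_def using rat_code_den_pos by (simp add: prod_pos)

lemma trace_cofactor_mult_den:
  assumes "i < N"
  shows "trace_cofactor N c i * rat_code_den (diag_rat_code N c i) = trace_den N c"
proof -
  have "trace_den N c
      = rat_code_den (diag_rat_code N c i) * (\<Prod>j\<in>{..<N} - {i}. rat_code_den (diag_rat_code N c j))"
    unfolding trace_den_def using assms by (subst prod.remove[of _ i]) auto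
  moreover have "trace_cofactor N c i = (\<Prod>j\<in>{..<N} - {i}. rat_code_den (diag_rat_code N c j))"
    unfolding trace_cofactor_def using assms by (subst prod.remove[of _ i]) (auto intro: prod.cong)
  ultimately show ?thesis by simp
qed

lemma trace_gmat_dec_eq:
  "(\<Sum>i<N. Re (gmat_dec N c i i))
    = ((\<Sum>i<N. real (rat_code_pos (diag_rat_code N c i) * trace_cofactor N c i))
        - (\<Sum>i<N. real (rat_code_neg (diag_rat_code N c i) * trace_cofactor N c i))) / real (trace_den N c)"
proof -
  have "Re (gmat_dec N c i i)
      = (real (rat_code_pos (diag_rat_code N c i) * trace_cofactor N c i)
          - real (rat_code_neg (diag_rat_code N c i) * trace_cofactor N c i)) / real (trace_den N c)"
    if i: "i < N" for i
  proof -
    let ?r = "diag_rat_code N c i"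
    have den: "trace_den N c = trace_cofactor N c i * rat_code_den ?r"
      using trace_cofactor_mult_den[OF i] by simp
    then have "0 < trace_cofactor N c i" using trace_den_pos[of N c] by (simp add: nat_0_less_mult_iff)
    then show ?thesis
      unfolding Re_gmat_dec_diag[OF i] rat_dec_eq_rat_code_parts den
      using rat_code_den_pos[of ?r] by (simp add: field_simps)
  qed
  then show ?thesis by (simp add: sum_divide_distrib[symmetric] sum_subtractf)
qed

lemma of_nat_diff_divide_eq_max:
  fixes a b :: nat and D :: real
  assumes "0 < D"
  shows "real (a - b) / D = max 0 ((real a - real b) / D)"
  using assms by (cases "a \<le> b") (auto simp: of_nat_diff divide_nonpos_pos)

lemma ratio_of_code_trace_code:
  assumes "0 < N"
  shows "ratio_of_code (trace_code N c) = max 0 ((\<Sum>i<N. Re (gmat_dec N c i i)) / real N)"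
proof -
  let ?P = "\<Sum>i<N. rat_code_pos (diag_rat_code N c i) * trace_cofactor N c i"
  let ?Q = "\<Sum>i<N. rat_code_neg (diag_rat_code N c i) * trace_cofactor N c i"
  have eq: "(\<Sum>i<N. Re (gmat_dec N c i i)) / real N = (real ?P - real ?Q) / real (N * trace_den N c)"
    unfolding trace_gmat_dec_eq by (simp add: field_simps)
  have pos: "0 < real (N * trace_den N c)" using assms trace_den_pos by simp
  have "ratio_of_code (trace_code N c) = real (?P - ?Q) / real (N * trace_den N c)"
    unfolding ratio_of_code_def trace_code_def by simp
  also have "\<dots> = max 0 ((real ?P - real ?Q) / real (N * trace_den N c))"
    using pos by (rule of_nat_diff_divide_eq_max)
  finally show ?thesis unfolding eq .
qed

lemma recursive_fn_trace_code: "recursive_fn n A \<Longrightarrow> recursive_fn n (\<lambda>xs. trace_code N (A xs))"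
  unfolding trace_code_def trace_den_def trace_cofactor_def diag_rat_code_def
  by (intro recursive_fn_prod_encode recursive_fn_diff recursive_fn_mult recursive_fn_sum recursive_fn_prod
      recursive_fn_if_const recursive_fn_rat_code_parts recursive_fn_fst_prod_decode
      recursive_fn_list_code_nth recursive_fn_const; assumption)

definition max_ratio_code :: "nat \<Rightarrow> nat \<Rightarrow> nat" where
  "max_ratio_code u v =
     (if fst (prod_decode u) * snd (prod_decode v) \<le> fst (prod_decode v) * snd (prod_decode u) then v else u)"

lemma ratio_of_code_max_ratio_code:
  assumes u: "0 < snd (prod_decode u)" and v: "0 < snd (prod_decode v)"
  shows "ratio_of_code (max_ratio_code u v) = max (ratio_of_code u) (ratio_of_code v)"
proof -
  obtain a b where ab: "prod_decode u = (a, b)" by (cases "prod_decode u")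
  obtain c d where cd: "prod_decode v = (c, d)" by (cases "prod_decode v")
  have "0 < b" "0 < d" using u v ab cd by auto
  then have "a * d \<le> c * b \<longleftrightarrow> real a / real b \<le> real c / real d"
    by (simp add: field_simps flip: of_nat_mult)
  then show ?thesis unfolding max_ratio_code_def ratio_of_code_def by (auto simp: ab cd)
qed

lemma recursive_fn_max_ratio_code:
  "recursive_fn n A \<Longrightarrow> recursive_fn n B \<Longrightarrow> recursive_fn n (\<lambda>xs. max_ratio_code (A xs) (B xs))"
  unfolding max_ratio_code_def
  by (intro recursive_fn_if_le recursive_fn_mult recursive_fn_fst_prod_decode recursive_fn_snd_prod_decode)

primrec max_code_upto :: "(nat \<Rightarrow> nat \<Rightarrow> nat) \<Rightarrow> nat \<Rightarrow> nat \<Rightarrow> nat" where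
  "max_code_upto H 0 y = H 0 y"
| "max_code_upto H (Suc k) y = max_ratio_code (max_code_upto H k y) (H (Suc k) y)"

lemma max_code_upto_in_range: "\<exists>j. max_code_upto H k y = H j y"
  by (induction k) (auto simp: max_ratio_code_def)

lemma ratio_of_code_max_code_upto:
  assumes den: "\<And>j. 0 < snd (prod_decode (H j y))"
  shows "ratio_of_code (max_code_upto H k y) = Max ((\<lambda>j. ratio_of_code (H j y)) ` {..k})"
proof (induction k)
  case (Suc k)
  have "0 < snd (prod_decode (max_code_upto H k y))"
    using den max_code_upto_in_range[of H k y] by metis
  then show ?case
    using Suc.IH by (simp add: ratio_of_code_max_ratio_code den atMost_Suc max.commute)
qed simp

lemma recursive_fn_max_code_upto:
  assumes H: "\<And>n A B. recursive_fn n A \<Longrightarrow> recursive_fn n B \<Longrightarrow> recursive_fn n (\<lambda>xs. H (A xs) (B xs))"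
    and "recursive_fn n A" and "recursive_fn n B"
  shows "recursive_fn n (\<lambda>xs. max_code_upto H (A xs) (B xs))"
proof (rule recursive_fn_primrec2[where f = "max_code_upto H" and F = "\<lambda>xs. H 0 (xs ! 0)"
      and G = "\<lambda>xs. max_ratio_code (xs ! 1) (H (Suc (xs ! 0)) (xs ! 2))"])
  show "recursive_fn 1 (\<lambda>xs. H 0 (xs ! 0))"
    by (intro H recursive_fn_const recursive_fn_proj) simp
  show "recursive_fn 3 (\<lambda>xs. max_ratio_code (xs ! 1) (H (Suc (xs ! 0)) (xs ! 2)))"
    by (intro recursive_fn_max_ratio_code H recursive_fn_Suc recursive_fn_proj) simp_all
qed (use assms in simp_all)

definition rat_code_of_ratio :: "nat \<Rightarrow> nat" where
  "rat_code_of_ratio u = prod_encode (2 * fst (prod_decode u), snd (prod_decode u))"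

lemma rat_dec_rat_code_of_ratio: "real_of_rat (rat_dec (rat_code_of_ratio u)) = ratio_of_code u"
proof -
  have "int_decode (2 * a) = int a" for a
    unfolding int_decode_def sum_decode_def by simp
  then show ?thesis
    unfolding rat_code_of_ratio_def rat_dec_def ratio_of_code_def
    by (simp add: Fract_of_int_quotient of_rat_divide)
qed

lemma tendsto_Max_atMost:
  fixes t :: "nat \<Rightarrow> real"
  assumes below: "\<And>k. t k \<le> L" and lim: "t \<longlonglongrightarrow> L"
  shows "(\<lambda>n. Max (t ` {..n})) \<longlonglongrightarrow> L"
proof (rule tendsto_sandwich[OF _ _ lim tendsto_const])
  show "\<forall>\<^sub>F n in sequentially. t n \<le> Max (t ` {..n})" by (simp add: Max_ge)
  show "\<forall>\<^sub>F n in sequentially. Max (t ` {..n}) \<le> L" using below by simp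
qed

text \<open>Running maxima turn approximations from below that need not be monotone into monotone ones.\<close>

lemma lower_computable_semi_measureI:
  assumes r: "semi_measure r" and g: "total_recursive g"
    and den: "\<And>w. 0 < snd (prod_decode (g w))"
    and below: "\<And>k s. ratio_of_code (g (prod_encode (k, str_enc s))) \<le> r s"
    and lim: "\<And>s. (\<lambda>k. ratio_of_code (g (prod_encode (k, str_enc s)))) \<longlonglongrightarrow> r s"
  shows "lower_computable_semi_measure r"
proof -
  define H where "H j y = g (prod_encode (j, y))" for j y
  define q where "q n s = rat_dec (rat_code_of_ratio (max_code_upto H n (str_enc s)))" for n s
  have q_eq: "real_of_rat (q n s) = Max ((\<lambda>k. ratio_of_code (g (prod_encode (k, str_enc s)))) ` {..n})"
    for n s
    unfolding q_def rat_dec_rat_code_of_ratio H_def by (rule ratio_of_code_max_code_upto) (rule den)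
  have "computable_rat_fun q"
  proof -
    have "recursive_fn n (\<lambda>xs. H (A xs) (B xs))" if "recursive_fn n A" "recursive_fn n B" for n A B
      unfolding H_def using that by (intro recursive_fn_total_recursive[OF g] recursive_fn_prod_encode)
    then have "total_recursive (\<lambda>w. rat_code_of_ratio
        (max_code_upto H (fst (prod_decode w)) (snd (prod_decode w))))"
      unfolding total_recursive_iff_recursive_fn rat_code_of_ratio_def
      by (intro recursive_fn_prod_encode recursive_fn_mult recursive_fn_const recursive_fn_fst_prod_decode
          recursive_fn_snd_prod_decode recursive_fn_max_code_upto recursive_fn_hd)
    then show ?thesis unfolding computable_rat_fun_def q_def by fastforce
  qed
  moreover have "q n s \<le> q (Suc n) s" for n s
  proof -
    have "real_of_rat (q n s) \<le> real_of_rat (q (Suc n) s)"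
      unfolding q_eq by (intro Max_mono image_mono) auto
    then show ?thesis by (simp add: of_rat_less_eq)
  qed
  moreover have "(\<lambda>n. real_of_rat (q n s)) \<longlonglongrightarrow> r s" for s
    unfolding q_eq using below lim by (rule tendsto_Max_atMost)
  ultimately show ?thesis
    unfolding lower_computable_semi_measure_def using r by blast
qed

lemma semi_measure_normalized_trace:
  assumes N: "0 < N" and M: "semi_povm N M"
  shows "semi_measure (\<lambda>s. (\<Sum>i<N. Re (M s i i)) / real N)"
  unfolding semi_measure_def
proof (intro conjI allI impI)
  show "0 \<le> (\<Sum>i<N. Re (M s i i)) / real N" for s
    using M psd_trace_nonneg unfolding semi_povm_def by simp
  fix F :: "bool list set" assume "finite F"
  then have L: "loewner_le N (msum F M) idm" using M unfolding semi_povm_def by blast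
  have "(\<Sum>s\<in>F. Re (M s i i)) \<le> 1" if "i < N" for i
    using loewner_le_diag[OF L that] unfolding msum_def idm_def by (simp add: Re_sum)
  then have "(\<Sum>i<N. \<Sum>s\<in>F. Re (M s i i)) \<le> real N"
    using sum_mono[of "{..<N}" "\<lambda>i. \<Sum>s\<in>F. Re (M s i i)" "\<lambda>_. 1"] by simp
  then show "(\<Sum>s\<in>F. (\<Sum>i<N. Re (M s i i)) / real N) \<le> 1"
    using N by (simp add: sum_divide_distrib[symmetric] sum.swap[of _ F])
qed

lemma lower_computable_semi_measure_normalized_trace:
  assumes N: "0 < N" and M: "lower_computable_semi_povm N M"
  shows "lower_computable_semi_measure (\<lambda>s. (\<Sum>i<N. Re (M s i i)) / real N)"
proof -
  let ?r = "\<lambda>s. (\<Sum>i<N. Re (M s i i)) / real N"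
  obtain f g where g: "total_recursive g"
    and f: "\<And>n s. f n s = gmat_dec N (g (prod_encode (n, str_enc s)))"
    and lim: "\<And>s i j. i < N \<Longrightarrow> j < N \<Longrightarrow> (\<lambda>n. f n s i j) \<longlonglongrightarrow> M s i j"
    and le: "\<And>n s. loewner_le N (f n s) (M s)"
    using M unfolding lower_computable_semi_povm_def computable_gmat_fun_def by metis
  have r: "semi_measure ?r"
    using N M semi_measure_normalized_trace unfolding lower_computable_semi_povm_def by blast
  have approx: "ratio_of_code (trace_code N (g (prod_encode (k, str_enc s))))
      = max 0 ((\<Sum>i<N. Re (f k s i i)) / real N)" for k s
    using ratio_of_code_trace_code[OF N] by (simp add: f)
  show ?thesis
  proof (rule lower_computable_semi_measureI[OF r, where g = "\<lambda>w. trace_code N (g w)"])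
    show "total_recursive (\<lambda>w. trace_code N (g w))"
      unfolding total_recursive_iff_recursive_fn
      by (intro recursive_fn_trace_code recursive_fn_total_recursive[OF g] recursive_fn_hd)
    show "0 < snd (prod_decode (trace_code N (g w)))" for w
      unfolding trace_code_def using N trace_den_pos by simp
    show "ratio_of_code (trace_code N (g (prod_encode (k, str_enc s)))) \<le> ?r s" for k s
    proof -
      have "(\<Sum>i<N. Re (f k s i i)) \<le> (\<Sum>i<N. Re (M s i i))"
        using loewner_le_diag[OF le] by (intro sum_mono) auto
      then show ?thesis
        unfolding approx using N r unfolding semi_measure_def by (simp add: divide_right_mono)
    qed
    show "(\<lambda>k. ratio_of_code (trace_code N (g (prod_encode (k, str_enc s))))) \<longlonglongrightarrow> ?r s" for s
    proof -
      have "(\<lambda>k. max 0 ((\<Sum>i<N. Re (f k s i i)) / real N)) \<longlonglongrightarrow> max 0 (?r s)"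
        using N lim by (intro tendsto_max tendsto_const tendsto_divide tendsto_sum tendsto_Re) auto
      then show ?thesis
        unfolding approx using r unfolding semi_measure_def by (simp add: max_absorb2)
    qed
  qed
qed

theorem mainTheorem7:
  fixes N :: nat and M :: "bool list \<Rightarrow> cmat" and m :: "bool list \<Rightarrow> real"
  assumes "0 < N"
    and "universal_semi_povm N M"
    and "universal_probability m"
  shows "\<exists>c::real>0. \<forall>s.
           loewner_le N (mscale (complex_of_real c) (M s)) (mscale (complex_of_real (m s)) idm) \<and>
           loewner_le N (mscale (complex_of_real (c * m s)) idm) (M s)"
proof -
  have M: "lower_computable_semi_povm N M" and m: "lower_computable_semi_measure m"
    using assms(2,3) unfolding universal_semi_povm_def universal_probability_def by blast+
  have psd: "psd N (M s)" for s
    using M unfolding lower_computable_semi_povm_def semi_povm_def by blast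
  have m_nonneg: "0 \<le> m s" for s
    using m unfolding lower_computable_semi_measure_def semi_measure_def by blast
  obtain c1 where "c1 > 0"
    and c1: "\<And>s. loewner_le N (mscale (complex_of_real c1) (mscale (complex_of_real (m s)) idm)) (M s)"
    using assms(2) lower_computable_semi_povm_scaled_idm[OF m] unfolding universal_semi_povm_def by blast
  obtain c2 where "c2 > 0" and c2: "\<And>s. c2 * ((\<Sum>i<N. Re (M s i i)) / real N) \<le> m s"
    using assms(3) lower_computable_semi_measure_normalized_trace[OF assms(1) M]
    unfolding universal_probability_def by blast
  define c where "c = min c1 (c2 / (real N * real N))"
  have "c > 0" using \<open>c1 > 0\<close> \<open>c2 > 0\<close> assms(1) by (simp add: c_def)
  have "loewner_le N (mscale (complex_of_real c) (M s)) (mscale (complex_of_real (m s)) idm)" for s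
  proof (rule psd_mscale_le_mscale_idm[OF psd])
    have "c * (real N * (\<Sum>k<N. Re (M s k k)))
        \<le> c2 / (real N * real N) * (real N * (\<Sum>k<N. Re (M s k k)))"
      using psd_trace_nonneg[OF psd] assms(1) by (intro mult_right_mono) (auto simp: c_def)
    also have "\<dots> \<le> m s" using c2[of s] assms(1) by (simp add: field_simps)
    finally show "c * (real N * (\<Sum>k<N. Re (M s k k))) \<le> m s" .
  qed (use \<open>c > 0\<close> in simp)
  moreover have "loewner_le N (mscale (complex_of_real (c * m s)) idm) (M s)" for s
  proof -
    have "loewner_le N (mscale (complex_of_real (c * m s)) idm) (mscale (complex_of_real (c1 * m s)) idm)"
      using m_nonneg[of s] by (intro loewner_le_mscale_idm mult_right_mono) (simp_all add: c_def)
    with c1[of s] show ?thesis by (simp add: mscale_mscale loewner_le_trans)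
  qed
  ultimately show ?thesis using \<open>c > 0\<close> by blast
qed

end
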